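(* Assume $\mathrm{recc}(C)\subseteq\mathrm{recc}(P^B)$. Let $D\subseteq N_1\cup N_2$ and fix $\hat x\in P^B$. Then the set function $f:2^{M_D}\to\mathbb{R}$ given by $$f(S)=\sum_{j\in S}\frac{\hat x_j}{\alpha_j}-\sum_{j\in N\setminus D}\frac{\hat x_j}{\varepsilon_j(S)}$$ is supermodular. Hence the problem $\max_{S\subseteq M_D}f(S)$ is a supermodular maximization problem.
   Context: Let $A\in\mathbb{R}^{m\times n}$ have full row rank, $b\in\mathbb{R}^m$, and $P=\{x\in\mathbb{R}^n_+:Ax=b\}$. Let $C\subseteq\mathbb{R}^n$ be an open convex set. Fix a basis $B$ of $P$ with nonbasic set $N=\{1,\dots,n\}\setminus B$. Write $P=\{x:x_i=\bar b_i-\sum_{j\in N}\bar a_{ij}x_j\ (i\in B),\ x\ge0\}$ with $\bar b\ge0$. The basic solution $\bar x$ has $\bar x_i=\bar b_i$ ($i\in B$) and $0$ ($i\in N$). $P^B$ is obtained by dropping $x_i\ge0$ for $i\in B$. For $j\in N$, $\bar r^j$ has $\bar r^j_k=-\bar a_{kj}$ ($k\in B$), $\bar r^j_j=1$, and $0$ otherwise. Thus $P^B=\{\bar x+\sum_{j\in N}x_j\bar r^j:x_j\ge0\}$, so $\hat x_j\ge0$ for $j\in N$. It is assumed that $\bar x\notin\mathrm{cl}(C)$. For $j\in N$, $\alpha_j=\inf\{\lambda\ge0:\bar x+\lambda\bar r^j\in C\}$ and $\beta_j=\sup\{\lambda\ge0:\bar x+\lambda\bar r^j\in C\}$, with $\alpha_j=+\infty$,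 $\beta_j=-\infty$ if the halfline misses $C$. Define - $N_1=\{j:\alpha_j\in(0,\infty),\beta_j=+\infty\}$; - $N_2=\{j:\alpha_j\in(0,\infty),\beta_j\in(\alpha_j,\infty)\}$. For a set $K$, $\mathrm{recc}(K)=\{d:x+\lambda d\in K\ \forall x\in K,\lambda\ge0\}$. We use the convention $t/+\infty=0$. $G_D^C=\{\bar x\}+\mathrm{conv}\big(\bigcup_{j\in D}\{\lambda\bar r^j:\lambda>\alpha_j\}\big)+\mathrm{recc}(C)$. For $(i,j)\in D\times(N\setminus D)$, $\gamma_{ij}=\sup\{\gamma\ge0:\alpha_i\bar r^i+\gamma\bar r^j\in\mathrm{recc}(G_D^C)\}$. Let $M_D=\{i\in D:\gamma_{ij}>0\ \forall j\in N\setminus D\}$. Finally, $\varepsilon_j(S)=\min_{i\in S}\gamma_{ij}$ for $S\neq\emptyset$ and $\varepsilon_j(\emptyset)=+\infty$. *)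

theory Defs
  imports "HOL-Analysis.Analysis" "HOL-Library.Extended_Real"
begin

definition recc :: "('a::real_vector) set \<Rightarrow> 'a set" where
  "recc K = {d. \<forall>x\<in>K. \<forall>t::real. t \<ge> 0 \<longrightarrow> x + t *\<^sub>R d \<in> K}"

definition basic_sol :: "real^'n^'m \<Rightarrow> real^'m \<Rightarrow> 'n set \<Rightarrow> real^'n" where
  "basic_sol A b B = (THE x. A *v x = b \<and> (\<forall>j. j \<notin> B \<longrightarrow> x $ j = 0))"

text \<open>Ray r^j: r^j_j = 1, r^j_k = 0 for other nonbasic k, and A r^j = 0
  (equivalently r^j_k = - abar_kj for k in B).\<close>
definition ray :: "real^'n^'m \<Rightarrow> 'n set \<Rightarrow> 'n \<Rightarrow> real^'n" where
  "ray A B j = (THE r. A *v r = 0 \<and> r $ j = 1 \<and> (\<forall>k. k \<notin> B \<and> k \<noteq> j \<longrightarrow> r $ k = 0))"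

text \<open>P^B: drop the nonnegativity of basic variables.\<close>
definition PB :: "real^'n^'m \<Rightarrow> real^'m \<Rightarrow> 'n set \<Rightarrow> (real^'n) set" where
  "PB A b B = {x. A *v x = b \<and> (\<forall>j. j \<notin> B \<longrightarrow> x $ j \<ge> 0)}"

definition alpha :: "'a::real_vector set \<Rightarrow> 'a \<Rightarrow> ('i \<Rightarrow> 'a) \<Rightarrow> 'i \<Rightarrow> ereal" where
  "alpha C xb r j = Inf (ereal ` {t. t \<ge> 0 \<and> xb + t *\<^sub>R r j \<in> C})"

definition beta :: "'a::real_vector set \<Rightarrow> 'a \<Rightarrow> ('i \<Rightarrow> 'a) \<Rightarrow> 'i \<Rightarrow> ereal" where
  "beta C xb r j = Sup (ereal ` {t. t \<ge> 0 \<and> xb + t *\<^sub>R r j \<in> C})"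

definition N1 :: "'a::real_vector set \<Rightarrow> 'a \<Rightarrow> ('i \<Rightarrow> 'a) \<Rightarrow> 'i set \<Rightarrow> 'i set" where
  "N1 C xb r N = {j\<in>N. 0 < alpha C xb r j \<and> alpha C xb r j < \<infinity> \<and> beta C xb r j = \<infinity>}"

definition N2 :: "'a::real_vector set \<Rightarrow> 'a \<Rightarrow> ('i \<Rightarrow> 'a) \<Rightarrow> 'i set \<Rightarrow> 'i set" where
  "N2 C xb r N = {j\<in>N. 0 < alpha C xb r j \<and> alpha C xb r j < \<infinity> \<and>
      alpha C xb r j < beta C xb r j \<and> beta C xb r j < \<infinity>}"

definition GDC :: "'a::real_vector set \<Rightarrow> 'a \<Rightarrow> ('i \<Rightarrow> 'a) \<Rightarrow> 'i set \<Rightarrow> 'a set" where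
  "GDC C xb r D = {xb + y + z | y z.
      y \<in> convex hull (\<Union>j\<in>D. {t *\<^sub>R r j | t. ereal t > alpha C xb r j}) \<and> z \<in> recc C}"

definition gamma :: "'a::real_vector set \<Rightarrow> 'a \<Rightarrow> ('i \<Rightarrow> 'a) \<Rightarrow> 'i set \<Rightarrow> 'i \<Rightarrow> 'i \<Rightarrow> ereal" where
  "gamma C xb r D i j = Sup (ereal ` {g. g \<ge> 0 \<and>
      real_of_ereal (alpha C xb r i) *\<^sub>R r i + g *\<^sub>R r j \<in> recc (GDC C xb r D)})"

definition MD :: "'a::real_vector set \<Rightarrow> 'a \<Rightarrow> ('i \<Rightarrow> 'a) \<Rightarrow> 'i set \<Rightarrow> 'i set \<Rightarrow> 'i set" where
  "MD C xb r N D = {i\<in>D. \<forall>j\<in>N - D. gamma C xb r D i j > 0}"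

definition eps :: "'a::real_vector set \<Rightarrow> 'a \<Rightarrow> ('i \<Rightarrow> 'a) \<Rightarrow> 'i set \<Rightarrow> 'i \<Rightarrow> 'i set \<Rightarrow> ereal" where
  "eps C xb r D j S = (if S = {} then \<infinity> else Min ((\<lambda>i. gamma C xb r D i j) ` S))"

definition ediv :: "real \<Rightarrow> ereal \<Rightarrow> real" where
  "ediv t e = (if e = \<infinity> then 0 else t / real_of_ereal e)"

definition fset :: "'a::real_vector set \<Rightarrow> 'a \<Rightarrow> ('i \<Rightarrow> 'a) \<Rightarrow> 'i set \<Rightarrow> 'i set
    \<Rightarrow> ('i \<Rightarrow> real) \<Rightarrow> 'i set \<Rightarrow> real" where
  "fset C xb r N D xh S =
     (\<Sum>j\<in>S. ediv (xh j) (alpha C xb r j)) - (\<Sum>j\<in>N - D. ediv (xh j) (eps C xb r D j S))"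

definition supermodular_on :: "'i set \<Rightarrow> ('i set \<Rightarrow> real) \<Rightarrow> bool" where
  "supermodular_on M f \<longleftrightarrow>
     (\<forall>S T. S \<subseteq> M \<longrightarrow> T \<subseteq> M \<longrightarrow> f S + f T \<le> f (S \<union> T) + f (S \<inter> T))"

end

theory Submission
  imports Defs
begin

text \<open>The first sum in f is modular. Since eps j (S \<union> T) = min (eps j S) (eps j T),
  eps j (S \<inter> T) \<ge> max (eps j S) (eps j T), and t \<mapsto> x / t is antitone on (0, \<infinity>] for x \<ge> 0,
  each subtracted term S \<mapsto> xh j / eps j S is submodular on M_D, where all gamma i j and hence
  all eps j S are positive.\<close>

lemma eps_Un:
  assumes "finite S" "finite T"
  shows "eps C xb r D j (S \<union> T) = min (eps C xb r D j S) (eps C xb r D j T)"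
  using assms by (auto simp: eps_def image_Un Min_Un min_def)

lemma eps_antimono:
  assumes "finite S" "S' \<subseteq> S"
  shows "eps C xb r D j S \<le> eps C xb r D j S'"
proof (cases "S' = {}")
  case True
  then show ?thesis by (simp add: eps_def)
next
  case False
  with assms show ?thesis
    by (auto simp: eps_def intro!: Min_antimono finite_subset[of S' S])
qed

lemma eps_pos:
  assumes "finite S" "S \<subseteq> MD C xb r N D" "j \<in> N - D"
  shows "eps C xb r D j S > 0"
  using assms by (auto simp: eps_def MD_def)

lemma ediv_nonneg: "x \<ge> 0 \<Longrightarrow> e \<ge> 0 \<Longrightarrow> ediv x e \<ge> 0"
  by (cases e) (auto simp: ediv_def)

lemma ediv_antimono:
  assumes "x \<ge> 0" "0 < e" "e \<le> e'"
  shows "ediv x e' \<le> ediv x e"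
proof (cases "e' = \<infinity>")
  case True
  then show ?thesis using assms ediv_nonneg[of x e] by (simp add: ediv_def)
next
  case False
  with assms show ?thesis
    by (cases e; cases e') (auto simp: ediv_def intro!: divide_left_mono)
qed

lemma ediv_min_add_le:
  assumes "x \<ge> 0" "0 < a" "0 < b" "max a b \<le> c"
  shows "ediv x (min a b) + ediv x c \<le> ediv x a + ediv x b"
proof -
  have "ediv x c \<le> ediv x a" "ediv x c \<le> ediv x b"
    using assms ediv_antimono[of x a c] ediv_antimono[of x b c] by auto
  then show ?thesis by (simp add: min_def)
qed

lemma ediv_eps_submodular:
  assumes "x \<ge> 0" "j \<in> N - D" "finite S" "finite T"
    and "S \<subseteq> MD C xb r N D" "T \<subseteq> MD C xb r N D"
  shows "ediv x (eps C xb r D j (S \<union> T)) + ediv x (eps C xb r D j (S \<inter> T))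
      \<le> ediv x (eps C xb r D j S) + ediv x (eps C xb r D j T)"
proof -
  have "max (eps C xb r D j S) (eps C xb r D j T) \<le> eps C xb r D j (S \<inter> T)"
    using assms(3,4) by (auto intro: eps_antimono)
  moreover have "eps C xb r D j S > 0" "eps C xb r D j T > 0"
    using assms by (auto intro: eps_pos)
  ultimately show ?thesis
    using ediv_min_add_le[OF assms(1)] by (simp add: eps_Un[OF assms(3,4)])
qed

lemma fset_supermodular:
  assumes "finite D" "\<And>j. j \<in> N - D \<Longrightarrow> xh j \<ge> 0"
  shows "supermodular_on (MD C xb r N D) (fset C xb r N D xh)"
  unfolding supermodular_on_def
proof (intro allI impI)
  fix S T
  assume S: "S \<subseteq> MD C xb r N D" and T: "T \<subseteq> MD C xb r N D"
  have fin: "finite S" "finite T"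
    using S T assms(1) by (auto simp: MD_def elim!: finite_subset)
  let ?a = "\<lambda>j. ediv (xh j) (alpha C xb r j)"
  let ?e = "\<lambda>j U. ediv (xh j) (eps C xb r D j U)"
  have "sum ?a S + sum ?a T = sum ?a (S \<union> T) + sum ?a (S \<inter> T)"
    using sum.union_inter[OF fin, of ?a] by simp
  moreover have "(\<Sum>j\<in>N - D. ?e j (S \<union> T) + ?e j (S \<inter> T)) \<le> (\<Sum>j\<in>N - D. ?e j S + ?e j T)"
    using assms(2) fin S T by (intro sum_mono ediv_eps_submodular) auto
  ultimately show "fset C xb r N D xh S + fset C xb r N D xh T
      \<le> fset C xb r N D xh (S \<union> T) + fset C xb r N D xh (S \<inter> T)"
    unfolding fset_def by (simp add: sum.distrib)
qed

theorem proposition3: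
  fixes A :: "real^'n^'m" and b :: "real^'m" and B :: "'n set"
    and C :: "(real^'n) set" and D :: "'n set" and xh :: "real^'n"
  assumes full_row_rank: "rank A = CARD('m)"
    and basis_card: "card B = CARD('m)"
    and basis_indep: "\<And>x. A *v x = 0 \<Longrightarrow> (\<forall>j. j \<notin> B \<longrightarrow> x $ j = 0) \<Longrightarrow> x = 0"
    and feasible: "\<And>i. basic_sol A b B $ i \<ge> 0"
    and C_open: "open C" and C_convex: "convex C"
    and xbar_notin: "basic_sol A b B \<notin> closure C"
    and recc_sub: "recc C \<subseteq> recc (PB A b B)"
    and D_sub: "D \<subseteq> N1 C (basic_sol A b B) (ray A B) (- B) \<union> N2 C (basic_sol A b B) (ray A B) (- B)"
    and xh_in: "xh \<in> PB A b B"
  shows "supermodular_on (MD C (basic_sol A b B) (ray A B) (- B) D)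
           (fset C (basic_sol A b B) (ray A B) (- B) D (\<lambda>j. xh $ j))"
  using xh_in by (intro fset_supermodular) (auto simp: PB_def)

end
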